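(* Let $p$ be a prime and let $\mathrm{E}_p(X)=\sum_{n=0}^{\infty} a_n X^n\in\mathbb{F}_p[[X]]$ be the reduction modulo $p$ of the Artin-Hasse exponential series. Define $c_{jp}=a_{jp}$ for $0\le j<p-1$ and $c_{(p-1)p}=a_{(p-1)p}+1$. Then for all integers $0\le k<p$ and $0\le r<p$ we have, in $\mathbb{F}_p$, \[ a_{rp+k}=(-1)^{k+1}\sum_{j=0}^{r}{p-k \brack j+1}\,c_{(r-j)p}. \]
   Context: The Artin-Hasse exponential series is $\mathrm{AH}(X)=\exp\bigl(\sum_{i=0}^{\infty}X^{p^i}/p^i\bigr)\in\mathbb{Q}[[X]]$; its coefficients are $p$-integral, so it can be reduced modulo $p$, giving $\mathrm{E}_p(X)\in\mathbb{F}_p[[X]]$. The unsigned Stirling numbers of the first kind ${n \brack i}$ ($0\le i\le n$) are defined by $y(y+1)\cdots(y+n-1)=\sum_{i=0}^{n}{n \brack i}y^i$ in $\mathbb{Z}[y]$, with ${n\brack i}=0$ for $i>n$; they are read modulo $p$ in the formula. *)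

theory Defs
  imports "HOL-Computational_Algebra.Computational_Algebra" "HOL-Combinatorics.Stirling"
begin

definition AH_log :: "nat \<Rightarrow> rat fps" where
  "AH_log p = Abs_fps (\<lambda>n. if (\<exists>i. n = p ^ i) then 1 / of_nat n else 0)"

definition artin_hasse :: "nat \<Rightarrow> rat fps" where
  "artin_hasse p = fps_compose (fps_exp 1) (AH_log p)"

text \<open>Coefficient a_n (as a rational number; it is p-integral, and its reduction mod p
  is the n-th coefficient of E_p).\<close>
definition AH_coeff :: "nat \<Rightarrow> nat \<Rightarrow> rat" where
  "AH_coeff p n = fps_nth (artin_hasse p) n"

definition AH_c :: "nat \<Rightarrow> nat \<Rightarrow> rat" where
  "AH_c p j = AH_coeff p (j * p) + (if j = p - 1 then 1 else 0)"

text \<open>Congruence modulo p of rationals in Z_(p): x - y lies in p Z_(p).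
  For p-integral x, y this is exactly equality of their reductions in F_p.\<close>
definition rat_cong_p :: "nat \<Rightarrow> rat \<Rightarrow> rat \<Rightarrow> bool" where
  "rat_cong_p p x y \<longleftrightarrow>
     (\<exists>a b::int. b \<noteq> 0 \<and> \<not> (int p dvd b) \<and> x - y = of_int (int p * a) / of_int b)"

end

theory Submission
  imports Defs "HOL-Number_Theory.Residues"
begin

text \<open>
  Differentiating \<open>AH = exp L\<close> gives \<open>AH' = AH L'\<close> with \<open>L' = \<Sum>\<^sub>i X^(p^i - 1)\<close>, so
  \<open>n a\<^sub>n = \<Sum>\<^bsub>p^i \<le> n\<^esub> a\<^bsub>n - p^i\<^esub>\<close>; for \<open>n < p\<^sup>2\<close> this is
  \<open>n a\<^sub>n = a\<^bsub>n-1\<^esub> + a\<^bsub>n-p\<^esub>\<close>. Let \<open>F(r,k)\<close> be the claimed value of \<open>a\<^bsub>rp+k\<^esub>\<close>.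
  The recurrence of the Stirling numbers gives \<open>F(r,k) + F(r-1,k+1) = (k+1-p) F(r,k+1)\<close>, and
  \<open>k+1-p \<equiv> rp+k+1\<close> mod \<open>p\<close>; so at every \<open>n = rp+k+1\<close> prime to \<open>p\<close> the values \<open>F\<close>
  satisfy the recurrence of the \<open>a\<^sub>n\<close> modulo \<open>p\<close>, and \<open>n\<close> can be cancelled.
  At \<open>n = rp\<close> one uses \<open>x(x+1)\<dots>(x+p-1) \<equiv> x^p - x\<close> mod \<open>p\<close>, which reduces \<open>F(r,0)\<close> to
  \<open>c\<^bsub>rp\<^esub> - [r = p-1] = a\<^bsub>rp\<^esub>\<close>. This needs \<open>a\<^bsub>rp\<^esub>\<close> to be \<open>p\<close>-integral, which holds because
  \<open>a\<^bsub>rp-1\<^esub> \<equiv> F(r-1,p-1) = (-1)^p a\<^bsub>(r-1)p\<^esub> \<equiv> -a\<^bsub>(r-1)p\<^esub>\<close>, so the right-hand side of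
  \<open>rp a\<^bsub>rp\<^esub> = a\<^bsub>rp-1\<^esub> + a\<^bsub>(r-1)p\<^esub>\<close> is divisible by \<open>p\<close>.
\<close>

section \<open>Stirling numbers of the first kind modulo a prime\<close>

lemma prime_dvd_coeff_if_roots_mod:
  fixes Q :: "int poly"
  assumes "prime p" "finite S" "inj_on (\<lambda>a. a mod int p) S"
    and "\<forall>a\<in>S. int p dvd poly Q a" and "degree Q < card S"
  shows "int p dvd Polynomial.coeff Q i"
  using assms(2-5)
proof (induction S arbitrary: Q i rule: finite_induct)
  case empty
  then show ?case by simp
next
  case (insert a S)
  show ?case
  proof (cases "degree Q = 0")
    case True
    then show ?thesis
      using insert.prems(2) by (cases i) (auto elim!: degree_eq_zeroE)
  next
    case False
    define Q' where "Q' = synthetic_div Q a"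
    have Q: "Q = [:-a, 1:] * Q' + [:poly Q a:]"
      unfolding Q'_def by (rule synthetic_div_correct'[symmetric])
    have "int p dvd poly Q' b" if "b \<in> S" for b
    proof -
      have "int p dvd poly Q b - poly Q a"
        using insert.prems(2) that by auto
      also have "poly Q b - poly Q a = (b - a) * poly Q' b"
        by (subst (1 2) Q) (simp add: algebra_simps)
      finally have "int p dvd (b - a) * poly Q' b" .
      moreover have "b mod int p \<noteq> a mod int p"
        using insert.prems(1) insert.hyps(2) that by (metis inj_onD insertCI)
      ultimately show ?thesis
        using assms(1) by (simp add: prime_dvd_mult_iff mod_eq_dvd_iff)
    qed
    moreover have "degree Q' < card S"
      using False insert.prems(3) insert.hyps unfolding Q'_def degree_synthetic_div by auto
    ultimately have "int p dvd Polynomial.coeff Q' j" for j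
      using insert.IH insert.prems(1) by (auto intro: inj_on_subset)
    moreover have "Polynomial.coeff Q i =
        Polynomial.coeff (pCons 0 Q') i - a * Polynomial.coeff Q' i + (if i = 0 then poly Q a else 0)"
      by (subst Q) (simp add: coeff_pCons split: nat.split)
    ultimately show ?thesis
      using insert.prems(2) by (cases i) auto
  qed
qed

lemma power_prime_cong_self:
  fixes a :: nat
  assumes "prime p"
  shows "[a ^ p = a] (mod p)"
proof (cases "p dvd a")
  case True
  then have a: "[a = 0] (mod p)"
    by (simp add: cong_0_iff)
  moreover have "(0::nat) ^ p = 0"
    using assms by (simp add: prime_gt_0_nat)
  ultimately have "[a ^ p = 0] (mod p)"
    by (metis cong_pow)
  then show ?thesis
    using a by (rule cong_trans[OF _ cong_sym])
next
  case False
  have "[a ^ (p - 1) * a = 1 * a] (mod p)"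
    using fermat_theorem[OF assms False] by (rule cong_mult) simp
  moreover have "a ^ (p - 1) * a = a ^ p"
    using assms by (simp add: prime_gt_0_nat power_eq_if)
  ultimately show ?thesis
    by simp
qed

lemma prime_dvd_pochhammer:
  assumes "prime p"
  shows "int p dvd pochhammer (a :: int) p"
proof -
  have "p dvd fact p"
    using prime_gt_0_nat[OF assms] by (intro dvd_fact) simp_all
  then have "int p dvd fact p"
    by (metis int_dvd_int_iff of_nat_fact)
  then show ?thesis
    using fact_dvd_pochhammer[of p a] by (rule dvd_trans)
qed

lemma stirling_prime_cong_below:
  assumes "prime p" "k < p"
  shows "[int (stirling p k) = (if k = 1 then -1 else 0)] (mod int p)"
proof -
  define c where "c j = int (stirling p j) - (if j = 1 then -1 else 0)" for j
  define Q where "Q = (\<Sum>j<p. Polynomial.monom (c j) j)"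
  have p2: "2 \<le> p"
    using assms(1) by (rule prime_ge_2_nat)
  have coeff_Q: "Polynomial.coeff Q j = (if j < p then c j else 0)" for j
    unfolding Q_def coeff_sum coeff_monom by (auto simp: sum.delta)
  have "degree Q \<le> p - 1"
    by (rule degree_le) (auto simp: coeff_Q)
  then have deg_Q: "degree Q < card {0..<int p}"
    using p2 by simp
  have poly_Q: "poly Q x = pochhammer x p - (x ^ p - x)" for x :: int
  proof -
    have "poly Q x = (\<Sum>j<p. int (stirling p j) * x ^ j + (if j = 1 then x else 0))"
      unfolding Q_def poly_sum poly_monom c_def by (rule sum.cong) (auto simp: algebra_simps)
    also have "\<dots> = (\<Sum>j<p. int (stirling p j) * x ^ j) + (\<Sum>j<p. if j = 1 then x else 0)"
      by (rule sum.distrib)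
    also have "(\<Sum>j<p. int (stirling p j) * x ^ j) = pochhammer x p - x ^ p"
      using stirling_pochhammer[of p x] by (simp add: lessThan_Suc_atMost[symmetric])
    also have "(\<Sum>j<p. if j = 1 then x else 0) = x"
      using p2 by (simp add: sum.delta)
    finally show ?thesis
      by simp
  qed
  have "int p dvd poly Q a" if "a \<in> {0..<int p}" for a
  proof -
    define i where "i = nat a"
    have a: "a = int i"
      using that unfolding i_def by simp
    have "int p dvd a ^ p - a"
      using power_prime_cong_self[OF assms(1), of i]
      unfolding a cong_iff_dvd_diff[symmetric] by (simp add: cong_int_iff[symmetric])
    then show ?thesis
      unfolding poly_Q using prime_dvd_pochhammer[OF assms(1)] by (rule dvd_diff[rotated])
  qed
  moreover have "inj_on (\<lambda>a. a mod int p) {0..<int p}"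
    by (auto intro: inj_onI)
  ultimately have "int p dvd Polynomial.coeff Q k"
    using prime_dvd_coeff_if_roots_mod[OF assms(1)] deg_Q by blast
  then show ?thesis
    using assms(2) by (simp add: coeff_Q c_def cong_iff_dvd_diff)
qed

lemma stirling_prime_cong:
  assumes "prime p"
  shows "[int (stirling p k) = (if k = p then 1 else if k = 1 then -1 else 0)] (mod int p)"
proof -
  have "1 < p"
    using assms by (rule prime_gt_1_nat)
  then consider "k < p" | "k = p" | "p < k"
    by linarith
  then show ?thesis
  proof cases
    case 1
    then show ?thesis
      using stirling_prime_cong_below[OF assms] by simp
  qed (use \<open>1 < p\<close> in simp_all)
qed

definition stirling_sum :: "nat \<Rightarrow> (nat \<Rightarrow> 'a :: semiring_1) \<Rightarrow> nat \<Rightarrow> 'a" where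
  "stirling_sum m c r = (\<Sum>j\<le>r. of_nat (stirling m (j + 1)) * c (r - j))"

lemma stirling_sum_1 [simp]: "stirling_sum 1 c r = c r"
proof -
  have "stirling_sum 1 c r = (\<Sum>j\<le>r. if j = 0 then c (r - j) else 0)"
    unfolding stirling_sum_def by (rule sum.cong) (auto simp: gr0_conv_Suc)
  then show ?thesis
    by simp
qed

lemma stirling_sum_Suc:
  assumes "0 < m"
  shows "stirling_sum (Suc m) c r =
    of_nat m * stirling_sum m c r + (if r = 0 then 0 else stirling_sum m c (r - 1))"
proof -
  have "stirling_sum (Suc m) c r =
      of_nat m * stirling_sum m c r + (\<Sum>j\<le>r. of_nat (stirling m j) * c (r - j))"
    unfolding stirling_sum_def
    by (simp add: sum.distrib sum_distrib_left algebra_simps)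
  also have "(\<Sum>j\<le>r. of_nat (stirling m j) * c (r - j)) =
      (if r = 0 then 0 else stirling_sum m c (r - 1))"
    using assms unfolding stirling_sum_def
    by (cases r) (simp_all only: sum.atMost_Suc_shift, simp_all)
  finally show ?thesis .
qed

section \<open>The recurrence of the Artin-Hasse coefficients\<close>

lemma AH_log_nth_0 [simp]: "AH_log p $ 0 = 0"
  unfolding AH_log_def by simp

lemma AH_coeff_0 [simp]: "AH_coeff p 0 = 1"
  unfolding AH_coeff_def artin_hasse_def by simp

lemma AH_coeff_recurrence:
  assumes "1 < p"
  shows "of_nat n * AH_coeff p n = (\<Sum>i | p ^ i \<le> n. AH_coeff p (n - p ^ i))"
proof (cases n)
  case 0
  then show ?thesis
    using assms by simp
next
  case (Suc m)
  define A where "A = artin_hasse p"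
  define L where "L = AH_log p"
  have deriv: "fps_deriv A = A * fps_deriv L"
    unfolding A_def artin_hasse_def L_def fps_compose_deriv[OF AH_log_nth_0] by simp
  have deriv_L: "fps_deriv L $ j = (if \<exists>i. Suc j = p ^ i then 1 else 0)" for j
    unfolding L_def AH_log_def by simp
  define K where "K = {k \<in> {0..m}. \<exists>i. n - k = p ^ i}"
  have "bij_betw (\<lambda>i. n - p ^ i) {i. p ^ i \<le> n} K"
  proof (rule bij_betw_imageI)
    show "inj_on (\<lambda>i. n - p ^ i) {i. p ^ i \<le> n}"
    proof (rule inj_onI)
      fix i j assume "i \<in> {i. p ^ i \<le> n}" "j \<in> {i. p ^ i \<le> n}" "n - p ^ i = n - p ^ j"
      then have "p ^ i = p ^ j"
        by simp
      then show "i = j"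
        using assms by simp
    qed
    show "(\<lambda>i. n - p ^ i) ` {i. p ^ i \<le> n} = K"
    proof (intro equalityI subsetI)
      fix k assume "k \<in> (\<lambda>i. n - p ^ i) ` {i. p ^ i \<le> n}"
      then obtain i where i: "p ^ i \<le> n" "k = n - p ^ i"
        by blast
      moreover have "1 \<le> p ^ i"
        using assms by simp
      ultimately have "k \<le> m" "n - k = p ^ i"
        unfolding Suc by linarith+
      then show "k \<in> K"
        unfolding K_def by auto
    next
      fix k assume "k \<in> K"
      then obtain i where "k \<le> m" "n - k = p ^ i"
        unfolding K_def by auto
      then show "k \<in> (\<lambda>i. n - p ^ i) ` {i. p ^ i \<le> n}"
        unfolding Suc by (intro image_eqI[of _ _ i]) auto
    qed
  qed
  then have reindex: "(\<Sum>i | p ^ i \<le> n. A $ (n - p ^ i)) = (\<Sum>k\<in>K. A $ k)"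
    by (rule sum.reindex_bij_betw)
  have "of_nat n * A $ n = (A * fps_deriv L) $ m"
    unfolding Suc by (simp flip: deriv)
  also have "\<dots> = (\<Sum>k=0..m. if \<exists>i. n - k = p ^ i then A $ k else 0)"
    unfolding fps_mult_nth deriv_L Suc by (intro sum.cong) (auto simp: Suc_diff_le)
  also have "\<dots> = (\<Sum>k\<in>K. A $ k)"
    unfolding K_def by (rule sum.inter_filter[symmetric]) simp
  finally show ?thesis
    using reindex unfolding A_def AH_coeff_def by simp
qed

lemma AH_coeff_recurrence_below_square:
  assumes "1 < p" "0 < n" "n < p * p"
  shows "of_nat n * AH_coeff p n = AH_coeff p (n - 1) + (if p \<le> n then AH_coeff p (n - p) else 0)"
proof -
  have "p ^ i \<le> n \<longleftrightarrow> i = 0 \<or> i = 1 \<and> p \<le> n" for i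
  proof -
    consider "i = 0" | "i = 1" | "2 \<le> i"
      by linarith
    then show ?thesis
    proof cases
      case 3
      then have "p * p \<le> p ^ i"
        using power_increasing[of 2 i p] assms(1) by (simp add: power2_eq_square)
      then show ?thesis
        using 3 assms(3) by auto
    qed (use assms in auto)
  qed
  then have "{i. p ^ i \<le> n} = (if p \<le> n then {0, 1} else {0})"
    by auto
  then show ?thesis
    using AH_coeff_recurrence[OF assms(1), of n] assms(1) by simp
qed

definition AH_formula :: "nat \<Rightarrow> nat \<Rightarrow> nat \<Rightarrow> rat" where
  "AH_formula p r k = (-1) ^ (k + 1) * stirling_sum (p - k) (AH_c p) r"

lemma AH_formula_step:
  assumes "Suc k < p"
  shows "AH_formula p r k + (if r = 0 then 0 else AH_formula p (r - 1) (Suc k)) =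
    - of_nat (p - Suc k) * AH_formula p r (Suc k)"
proof -
  have "p - k = Suc (p - Suc k)" "0 < p - Suc k"
    using assms by simp_all
  then show ?thesis
    unfolding AH_formula_def by (simp add: stirling_sum_Suc algebra_simps)
qed

lemma AH_formula_last:
  assumes "0 < p"
  shows "AH_formula p r (p - 1) = (-1) ^ p * AH_c p r"
proof -
  have "p - (p - 1) = 1"
    using assms by simp
  then show ?thesis
    unfolding AH_formula_def \<open>p - (p - 1) = 1\<close> stirling_sum_1 using assms by simp
qed

section \<open>Rationals integral at \<open>p\<close>\<close>

definition p_integral :: "nat \<Rightarrow> rat \<Rightarrow> bool" where
  "p_integral p x \<longleftrightarrow> (\<exists>a b::int. b \<noteq> 0 \<and> \<not> int p dvd b \<and> x = of_int a / of_int b)"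

context
  fixes p :: nat
  assumes prime: "prime p"
begin

lemma p_integral_of_int [simp]: "p_integral p (of_int a)"
  unfolding p_integral_def using prime
  by (intro exI[of _ a] exI[of _ 1]) (auto simp: prime_gt_1_nat)

lemma p_integral_0 [simp]: "p_integral p 0"
  using p_integral_of_int[of 0] by simp

lemma p_integral_1 [simp]: "p_integral p 1"
  using p_integral_of_int[of 1] by simp

lemma p_integral_of_nat [simp]: "p_integral p (of_nat n)"
  using p_integral_of_int[of "int n"] by simp

lemma p_integral_inverse:
  assumes "\<not> int p dvd m"
  shows "p_integral p (1 / of_int m)"
  unfolding p_integral_def using assms by (intro exI[of _ 1] exI[of _ m]) auto

lemma p_integral_add_mult:
  assumes "p_integral p x" "p_integral p y"
  shows "p_integral p (x + y)" "p_integral p (x * y)"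
proof -
  obtain a b a' b' where x: "b \<noteq> 0" "\<not> int p dvd b" "x = of_int a / of_int b"
    and y: "b' \<noteq> 0" "\<not> int p dvd b'" "y = of_int a' / of_int b'"
    using assms unfolding p_integral_def by blast
  have denom: "b * b' \<noteq> 0" "\<not> int p dvd b * b'"
    using x y prime by (auto simp: prime_dvd_mult_iff)
  have "x + y = of_int (a * b' + a' * b) / of_int (b * b')"
       "x * y = of_int (a * a') / of_int (b * b')"
    unfolding x(3) y(3) using x(1) y(1) by (simp_all add: field_simps)
  with denom show "p_integral p (x + y)" "p_integral p (x * y)"
    unfolding p_integral_def by blast+
qed

lemmas p_integral_add = p_integral_add_mult(1)
lemmas p_integral_mult = p_integral_add_mult(2)

lemma p_integral_uminus: "p_integral p x \<Longrightarrow> p_integral p (- x)"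
  using p_integral_mult[OF p_integral_of_int[of "-1"], of x] by simp

lemma p_integral_power: "p_integral p x \<Longrightarrow> p_integral p (x ^ n)"
  by (induction n) (auto intro: p_integral_mult)

lemma p_integral_sum:
  "(\<And>i. i \<in> A \<Longrightarrow> p_integral p (f i)) \<Longrightarrow> p_integral p (\<Sum>i\<in>A. f i)"
  by (induction A rule: infinite_finite_induct) (auto simp: p_integral_add)

lemma rat_cong_p_iff: "rat_cong_p p x y \<longleftrightarrow> (\<exists>z. p_integral p z \<and> x = y + of_nat p * z)"
proof
  assume "rat_cong_p p x y"
  then obtain a b :: int where "b \<noteq> 0" "\<not> int p dvd b" "x - y = of_int (int p * a) / of_int b"
    unfolding rat_cong_p_def by blast
  then show "\<exists>z. p_integral p z \<and> x = y + of_nat p * z"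
    unfolding p_integral_def by (intro exI[of _ "of_int a / of_int b"]) (auto simp: algebra_simps)
next
  assume "\<exists>z. p_integral p z \<and> x = y + of_nat p * z"
  then obtain a b :: int where "b \<noteq> 0" "\<not> int p dvd b" "x = y + of_nat p * (of_int a / of_int b)"
    unfolding p_integral_def by blast
  then show "rat_cong_p p x y"
    unfolding rat_cong_p_def by (intro exI[of _ a] exI[of _ b]) simp
qed

lemma rat_cong_p_refl [simp]: "rat_cong_p p x x"
  unfolding rat_cong_p_iff by (intro exI[of _ 0]) simp

lemma rat_cong_p_sym:
  assumes "rat_cong_p p x y"
  shows "rat_cong_p p y x"
proof -
  obtain z where "p_integral p z" "x = y + of_nat p * z"
    using assms unfolding rat_cong_p_iff by blast
  then show ?thesis
    unfolding rat_cong_p_iff by (intro exI[of _ "- z"]) (auto intro: p_integral_uminus)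
qed

lemma rat_cong_p_add:
  assumes "rat_cong_p p x y" "rat_cong_p p x' y'"
  shows "rat_cong_p p (x + x') (y + y')"
proof -
  obtain z z' where "p_integral p z" "x = y + of_nat p * z" "p_integral p z'" "x' = y' + of_nat p * z'"
    using assms unfolding rat_cong_p_iff by blast
  then show ?thesis
    unfolding rat_cong_p_iff
    by (intro exI[of _ "z + z'"]) (auto intro: p_integral_add simp: algebra_simps)
qed

lemma rat_cong_p_trans:
  assumes "rat_cong_p p x y" "rat_cong_p p y u"
  shows "rat_cong_p p x u"
proof -
  obtain z z' where "p_integral p z" "x = y + of_nat p * z" "p_integral p z'" "y = u + of_nat p * z'"
    using assms unfolding rat_cong_p_iff by blast
  then show ?thesis
    unfolding rat_cong_p_iff
    by (intro exI[of _ "z + z'"]) (auto intro: p_integral_add simp: algebra_simps)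
qed

declare rat_cong_p_trans [trans]

lemma rat_cong_p_mult_left:
  assumes "p_integral p w" "rat_cong_p p x y"
  shows "rat_cong_p p (w * x) (w * y)"
proof -
  obtain z where "p_integral p z" "x = y + of_nat p * z"
    using assms(2) unfolding rat_cong_p_iff by blast
  then show ?thesis
    unfolding rat_cong_p_iff using assms(1)
    by (intro exI[of _ "w * z"]) (auto intro: p_integral_mult simp: algebra_simps)
qed

lemma rat_cong_p_mult_right:
  "p_integral p w \<Longrightarrow> rat_cong_p p x y \<Longrightarrow> rat_cong_p p (x * w) (y * w)"
  using rat_cong_p_mult_left by (simp add: mult.commute)

lemma rat_cong_p_sum:
  "(\<And>i. i \<in> A \<Longrightarrow> rat_cong_p p (f i) (g i)) \<Longrightarrow> rat_cong_p p (\<Sum>i\<in>A. f i) (\<Sum>i\<in>A. g i)"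
  by (induction A rule: infinite_finite_induct) (auto intro: rat_cong_p_add)

lemma rat_cong_p_of_int:
  assumes "[a = b] (mod int p)"
  shows "rat_cong_p p (of_int a) (of_int b)"
proof -
  obtain k where "a = b + int p * k"
    using assms cong_iff_lin[of b a "int p"] cong_sym by blast
  then show ?thesis
    unfolding rat_cong_p_iff by (intro exI[of _ "of_int k"]) simp
qed

lemma p_integral_if_rat_cong_p: "rat_cong_p p x y \<Longrightarrow> p_integral p y \<Longrightarrow> p_integral p x"
  unfolding rat_cong_p_iff by (auto intro!: p_integral_add p_integral_mult)

lemma p_integral_divide_if_rat_cong_p_0: "rat_cong_p p x 0 \<Longrightarrow> p_integral p (x / of_nat p)"
  unfolding rat_cong_p_iff using prime by auto

lemma rat_cong_p_cancel:
  assumes "\<not> p dvd n" and "rat_cong_p p (of_nat n * x) (of_nat n * y)"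
  shows "rat_cong_p p x y"
proof -
  obtain z where z: "p_integral p z" "of_nat n * x = of_nat n * y + of_nat p * z"
    using assms(2) unfolding rat_cong_p_iff by blast
  have "n \<noteq> 0"
    using assms(1) by (metis dvd_0_right)
  with z(2) have "x = y + of_nat p * (1 / of_int (int n) * z)"
    by (simp add: field_simps)
  moreover have "p_integral p (1 / of_int (int n) * z)"
    using assms(1) z(1) by (intro p_integral_mult p_integral_inverse) auto
  ultimately show ?thesis
    unfolding rat_cong_p_iff by blast
qed

section \<open>The coefficients \<open>a\<^bsub>rp+k\<^esub>\<close> modulo \<open>p\<close>\<close>

lemma p_integral_stirling_sum:
  "(\<And>i. i \<le> r \<Longrightarrow> p_integral p (c i)) \<Longrightarrow> p_integral p (stirling_sum m c r)"
  unfolding stirling_sum_def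
  by (intro p_integral_sum p_integral_mult) auto

lemma stirling_sum_prime_cong:
  assumes "r < p" and "\<And>i. i \<le> r \<Longrightarrow> p_integral p (c i)"
  shows "rat_cong_p p (stirling_sum p c r) (- c r + (if r = p - 1 then c 0 else 0))"
proof -
  have p2: "2 \<le> p"
    using prime by (rule prime_ge_2_nat)
  define \<delta> :: "nat \<Rightarrow> int"
    where "\<delta> j = (if j + 1 = p then 1 else if j + 1 = 1 then -1 else 0)" for j
  have "rat_cong_p p (stirling_sum p c r) (\<Sum>j\<le>r. of_int (\<delta> j) * c (r - j))"
    unfolding stirling_sum_def
  proof (rule rat_cong_p_sum, rule rat_cong_p_mult_right)
    fix j
    show "p_integral p (c (r - j))"
      using assms(2) by simp
    show "rat_cong_p p (of_nat (stirling p (j + 1))) (of_int (\<delta> j))"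
      using rat_cong_p_of_int[OF stirling_prime_cong[OF prime, of "j + 1"]]
      unfolding \<delta>_def of_int_of_nat_eq .
  qed
  also have "(\<Sum>j\<le>r. of_int (\<delta> j) * c (r - j)) =
      (\<Sum>j\<le>r. (if j = p - 1 then c (r - j) else 0) - (if j = 0 then c (r - j) else 0))"
    using p2 by (intro sum.cong) (auto simp: \<delta>_def)
  also have "\<dots> = - c r + (if r = p - 1 then c 0 else 0)"
    using assms(1) by (simp add: sum_subtractf) linarith
  finally show ?thesis .
qed

lemma p_integral_AH_c:
  "p_integral p (AH_coeff p (i * p)) \<Longrightarrow> p_integral p (AH_c p i)"
  unfolding AH_c_def by (auto intro: p_integral_add simp: p_integral_1)

lemma p_integral_AH_formula:
  "(\<And>i. i \<le> r \<Longrightarrow> p_integral p (AH_coeff p (i * p))) \<Longrightarrow> p_integral p (AH_formula p r k)"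
  unfolding AH_formula_def
  by (intro p_integral_mult p_integral_stirling_sum p_integral_AH_c
      p_integral_power p_integral_uminus p_integral_1)

lemma rat_cong_p_neg_one_power: "rat_cong_p p ((-1) ^ p) (-1)"
proof (cases "p = 2")
  case True
  have "[(-1) ^ p = -1] (mod int p)"
    unfolding True by (simp add: cong_iff_dvd_diff)
  then show ?thesis
    using rat_cong_p_of_int[of "(-1) ^ p" "-1"] by simp
next
  case False
  then have "2 < p"
    using prime_ge_2_nat[OF prime] by simp
  then have "odd p"
    by (rule prime_odd_nat[OF prime])
  then show ?thesis
    using rat_cong_p_refl by simp
qed

lemma AH_coeff_rat_cong_p_multiple:
  assumes "r < p" and row: "\<And>i. i \<le> r \<Longrightarrow> p_integral p (AH_coeff p (i * p))"
  shows "rat_cong_p p (AH_coeff p (r * p)) (AH_formula p r 0)"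
proof -
  have "rat_cong_p p (stirling_sum p (AH_c p) r) (- AH_c p r + (if r = p - 1 then AH_c p 0 else 0))"
    using row by (intro stirling_sum_prime_cong[OF assms(1)] p_integral_AH_c)
  from rat_cong_p_mult_left[OF p_integral_uminus[OF p_integral_1] this]
  have "rat_cong_p p (AH_formula p r 0) (AH_c p r - (if r = p - 1 then AH_c p 0 else 0))"
    unfolding AH_formula_def by simp
  also have "AH_c p r - (if r = p - 1 then AH_c p 0 else 0) = AH_coeff p (r * p)"
    using prime_ge_2_nat[OF prime] unfolding AH_c_def by simp
  finally show ?thesis
    by (rule rat_cong_p_sym)
qed

lemma p_integral_AH_coeff_multiple:
  assumes "0 < r" "r < p"
    and below: "\<And>i. i < r \<Longrightarrow> p_integral p (AH_coeff p (i * p))"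
    and prev: "rat_cong_p p (AH_coeff p ((r - 1) * p + (p - 1))) (AH_formula p (r - 1) (p - 1))"
  shows "p_integral p (AH_coeff p (r * p))"
proof -
  have p0: "0 < p"
    using prime by (rule prime_gt_0_nat)
  define b where "b = AH_coeff p ((r - 1) * p)"
  have "r * p - 1 = (r - 1) * p + (p - 1)" "r * p - p = (r - 1) * p"
    using assms(1) p0 by (auto simp: algebra_simps)
  then have rec: "of_nat (r * p) * AH_coeff p (r * p) = AH_coeff p ((r - 1) * p + (p - 1)) + b"
    using AH_coeff_recurrence_below_square[OF prime_gt_1_nat[OF prime], of "r * p"] assms(1,2) p0
    unfolding b_def by simp
  have b: "p_integral p b"
    using below assms(1) unfolding b_def by simp
  have "AH_formula p (r - 1) (p - 1) = (-1) ^ p * b"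
    using AH_formula_last[OF p0] assms(1,2) unfolding AH_c_def b_def by simp
  then have "rat_cong_p p (AH_coeff p ((r - 1) * p + (p - 1))) ((-1) ^ p * b)"
    using prev by simp
  also have "rat_cong_p p ((-1) ^ p * b) ((-1) * b)"
    by (rule rat_cong_p_mult_right[OF b rat_cong_p_neg_one_power])
  finally have "rat_cong_p p (of_nat (r * p) * AH_coeff p (r * p)) ((-1) * b + b)"
    unfolding rec by (rule rat_cong_p_add[OF _ rat_cong_p_refl])
  then have "p_integral p (of_nat (r * p) * AH_coeff p (r * p) / of_nat p)"
    by (intro p_integral_divide_if_rat_cong_p_0) simp
  then have "p_integral p (of_nat r * AH_coeff p (r * p))"
    using p0 by simp
  moreover have "\<not> int p dvd int r"
    using assms(1,2) by (auto dest: dvd_imp_le)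
  ultimately have "p_integral p (1 / of_int (int r) * (of_nat r * AH_coeff p (r * p)))"
    by (rule p_integral_mult[OF p_integral_inverse, rotated])
  then show ?thesis
    using assms(1) by simp
qed

lemma AH_coeff_rat_cong_p_not_multiple:
  assumes "r < p" "Suc k < p"
    and prev: "rat_cong_p p (AH_coeff p (r * p + k)) (AH_formula p r k)"
    and prev_row: "0 < r \<Longrightarrow>
      rat_cong_p p (AH_coeff p ((r - 1) * p + Suc k)) (AH_formula p (r - 1) (Suc k))"
    and integral: "p_integral p (AH_formula p r (Suc k))"
  shows "rat_cong_p p (AH_coeff p (r * p + Suc k)) (AH_formula p r (Suc k))"
proof -
  define n where "n = r * p + Suc k"
  define T where "T = AH_formula p r (Suc k)"
  have "n - 1 = r * p + k" "p \<le> n \<longleftrightarrow> 0 < r" "0 < r \<Longrightarrow> n - p = (r - 1) * p + Suc k"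
    using assms(2) unfolding n_def by (cases r; simp add: algebra_simps)+
  moreover have "n < Suc r * p" "Suc r * p \<le> p * p"
    using assms(2) mult_le_mono1[of "Suc r" p p] assms(1) unfolding n_def by simp_all
  ultimately have rec: "of_nat n * AH_coeff p n =
      AH_coeff p (r * p + k) + (if r = 0 then 0 else AH_coeff p ((r - 1) * p + Suc k))"
    using AH_coeff_recurrence_below_square[OF prime_gt_1_nat[OF prime], of n] unfolding n_def by simp
  have "rat_cong_p p (of_nat n * AH_coeff p n)
      (AH_formula p r k + (if r = 0 then 0 else AH_formula p (r - 1) (Suc k)))"
    unfolding rec using prev prev_row by (auto intro: rat_cong_p_add)
  also have "AH_formula p r k + (if r = 0 then 0 else AH_formula p (r - 1) (Suc k)) =
      - of_nat (p - Suc k) * T"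
    unfolding T_def by (rule AH_formula_step[OF assms(2)])
  also have "rat_cong_p p (- of_nat (p - Suc k) * T) (of_nat n * T)"
    unfolding rat_cong_p_iff
  proof (intro exI conjI)
    show "p_integral p (- (of_nat (Suc r) * T))"
      using integral unfolding T_def
      by (intro p_integral_uminus p_integral_mult p_integral_of_nat)
    show "- of_nat (p - Suc k) * T = of_nat n * T + of_nat p * - (of_nat (Suc r) * T)"
      using assms(2) unfolding n_def by (simp add: of_nat_diff algebra_simps)
  qed
  finally have "rat_cong_p p (of_nat n * AH_coeff p n) (of_nat n * T)" .
  moreover have "n mod p = Suc k"
    using assms(2) unfolding n_def by simp
  then have "\<not> p dvd n"
    by (simp add: dvd_eq_mod_eq_0)
  ultimately show ?thesis
    unfolding n_def T_def by (rule rat_cong_p_cancel[rotated])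
qed

lemma AH_coeff_rat_cong_p_AH_formula:
  assumes "r < p" "k < p"
  shows "p_integral p (AH_coeff p (r * p + k)) \<and>
    rat_cong_p p (AH_coeff p (r * p + k)) (AH_formula p r k)"
  using assms
proof (induction r arbitrary: k rule: less_induct)
  case (less r)
  have p0: "0 < p"
    using prime by (rule prime_gt_0_nat)
  have below: "p_integral p (AH_coeff p (i * p))" if "i < r" for i
    using less.IH[of i 0] that less.prems p0 by simp
  have "p_integral p (AH_coeff p (r * p))"
  proof (cases "r = 0")
    case False
    show ?thesis
    proof (rule p_integral_AH_coeff_multiple[OF _ less.prems(1) below])
      show "rat_cong_p p (AH_coeff p ((r - 1) * p + (p - 1))) (AH_formula p (r - 1) (p - 1))"
        using less.IH[of "r - 1" "p - 1"] less.prems False p0 by simp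
    qed (use False in simp)
  qed simp
  with below have row: "p_integral p (AH_coeff p (i * p))" if "i \<le> r" for i
    using that by (cases "i = r") auto
  show ?case
    using less.prems(2)
  proof (induction k)
    case 0
    then show ?case
      using row AH_coeff_rat_cong_p_multiple[OF less.prems(1) row] by simp
  next
    case (Suc k)
    have integral: "p_integral p (AH_formula p r (Suc k))"
      by (rule p_integral_AH_formula[OF row])
    have "rat_cong_p p (AH_coeff p (r * p + Suc k)) (AH_formula p r (Suc k))"
    proof (rule AH_coeff_rat_cong_p_not_multiple[OF less.prems(1) Suc.prems _ _ integral])
      show "rat_cong_p p (AH_coeff p (r * p + k)) (AH_formula p r k)"
        using Suc.IH Suc.prems by simp
      show "rat_cong_p p (AH_coeff p ((r - 1) * p + Suc k)) (AH_formula p (r - 1) (Suc k))"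
        if "0 < r"
        using less.IH[of "r - 1" "Suc k"] that Suc.prems less.prems(1) by simp
    qed
    then show ?case
      using p_integral_if_rat_cong_p[OF _ integral] by blast
  qed
qed

end

theorem proposition1p4:
  fixes p k r :: nat
  assumes "prime p" and "k < p" and "r < p"
  shows "rat_cong_p p (AH_coeff p (r * p + k))
           ((-1) ^ (k + 1) * (\<Sum>j\<le>r. of_nat (stirling (p - k) (j + 1)) * AH_c p (r - j)))"
  using AH_coeff_rat_cong_p_AH_formula[OF assms(1,3,2)]
  unfolding AH_formula_def stirling_sum_def by blast

end
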